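(* For every $n\ge 0$ and every $2^n$-mode raw LOPP-circuit $C$, $$[\![D(C)]\!]\circ\mathfrak G_n=\mathfrak G_n\circ[\![C]\!].$$
   Context: Raw LOPP-circuits. These are terms generated from $\mathrm{ph}(\varphi)$ ($1$ mode), $\mathrm{bs}(\theta)$ ($2$ modes), $\mathrm{id}$ ($1$ mode), $\mathrm{sw}$ ($2$ modes) and the empty circuit ($0$ modes), combined by $\circ$ (same number of modes) and $\otimes$ (stacking, the first factor on top). Their semantics $[\![C]\!]$ is a matrix on $\mathbb C^m$ ($m$ modes), with $[\![C_2\circ C_1]\!]=[\![C_2]\!][\![C_1]\!]$, $[\![C_1\otimes C_2]\!]=[\![C_1]\!]\oplus[\![C_2]\!]$, and: - $[\![\mathrm{ph}(\varphi)]\!]=(e^{i\varphi})$; - $[\![\mathrm{bs}(\theta)]\!]=\begin{pmatrix}\cos\theta&i\sin\theta\\i\sin\theta&\cos\theta\end{pmatrix}$; - $[\![\mathrm{sw}]\!]=\begin{pmatrix}0&1\\1&0\end{pmatrix}$; - $[\![\mathrm{id}]\!]=(1)$. Gray code. $G_0(0)=\epsilon$, and $G_n(k)=0G_{n-1}(k)$ if $k<2^{n-1}$, while $G_n(k)=1G_{n-1}(2^n-1-k)$ if $k\ge2^{n-1}$. The map $\mathfrak G_n:\mathbb C^{2^n}\to\mathbb C^{\{0,1\}^n}$ is $|k\rangle\mapsto|G_n(k)\rangle$. For $0\le k\le 2^n-2$, define bit strings $x_{k,n},y_{k,n}$ as follows: - if $k=2j$, then $x_{k,n}=G_{n-1}(j)$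 and $y_{k,n}=\epsilon$; - if $k=2j+1$, write $G_n(k)=w\,a\,1\,0^q$ with $q\in\{0,\dots,n-2\}$, $a\in\{0,1\}$, $w\in\{0,1\}^{n-q-2}$, and set $x_{k,n}=w$ and $y_{k,n}=10^q$. Controlled operators. For bit strings $x,y$ with $|x|+|y|=n-1$ and a $2\times2$ matrix $A$, let $\Lambda^x_yA$ be the operator on $\mathbb C^{\{0,1\}^n}$ with $$\Lambda^x_yA\,|u,a,v\rangle=\begin{cases}|u\rangle\otimes A|a\rangle\otimes|v\rangle&\text{if }uv=xy,\\ |u,a,v\rangle&\text{otherwise},\end{cases}$$ where $|u|=|x|$ and $|v|=|y|$. For $z\in\{0,1\}^n$, let $\Lambda^z s(\varphi)$ multiply $|z\rangle$ by $e^{i\varphi}$ and fix every other basis vector. Decoding semantics. For a raw LOPP-circuit $C$ on $\ell$ modes and $k$ with $k+\ell\le2^n$, define an operator $[\![D_{k,n}(C)]\!]$ on $\mathbb C^{\{0,1\}^n}$ inductively: - $[\![D_{k,n}(C_1\otimes C_2)]\!]=[\![D_{k+\ell_1,n}(C_2)]\!]\,[\![D_{k,n}(C_1)]\!]$, where $C_1$ has $\ell_1$ modes; - $[\![D_{k,n}(C_2\circ C_1)]\!]=[\![D_{k,n}(C_2)]\!]\,[\![D_{k,n}(C_1)]\!]$; - $\mathrm{id}$ and the empty circuit give the identity; - $[\![D_{k,n}(\mathrm{ph}(\varphi))]\!]=\Lambda^{G_n(k)}s(\varphi)$; - $[\![D_{k,n}(\mathrm{sw})]\!]=\Lambda^{x_{k,n}}_{y_{k,n}}X$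 with $X=\begin{pmatrix}0&1\\1&0\end{pmatrix}$; - $[\![D_{k,n}(\mathrm{bs}(\theta))]\!]=\Lambda^{x_{k,n}}_{y_{k,n}}R_X(-2\theta)$, where $R_X(\alpha)=\begin{pmatrix}\cos\frac\alpha2&-i\sin\frac\alpha2\\-i\sin\frac\alpha2&\cos\frac\alpha2\end{pmatrix}$. Finally $[\![D(C)]\!]:=[\![D_{0,n}(C)]\!]$. This is the semantics of the decoded quantum circuit $D(C)$. *)

theory Defs
  imports Complex_Main
begin

datatype lopp = PH real | BS real | ID | SW | EMPTY
  | Seq lopp lopp   (* Seq C2 C1 = C2 \<circ> C1 *)
  | Par lopp lopp   (* Par C1 C2 = C1 \<otimes> C2, C1 on top *)

fun modes :: "lopp \<Rightarrow> nat" where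
  "modes (PH _) = 1"
| "modes (BS _) = 2"
| "modes ID = 1"
| "modes SW = 2"
| "modes EMPTY = 0"
| "modes (Seq C2 C1) = modes C1"
| "modes (Par C1 C2) = modes C1 + modes C2"

fun wf_lopp :: "lopp \<Rightarrow> bool" where
  "wf_lopp (Seq C2 C1) = (wf_lopp C2 \<and> wf_lopp C1 \<and> modes C2 = modes C1)"
| "wf_lopp (Par C1 C2) = (wf_lopp C1 \<and> wf_lopp C2)"
| "wf_lopp _ = True"

text \<open>Semantics: an m x m complex matrix, given by its entries (0 outside the range).\<close>
fun sem :: "lopp \<Rightarrow> nat \<Rightarrow> nat \<Rightarrow> complex" where
  "sem (PH \<phi>) = (\<lambda>i j. if i = 0 \<and> j = 0 then exp (\<i> * of_real \<phi>) else 0)"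
| "sem (BS \<theta>) = (\<lambda>i j. if i < 2 \<and> j < 2 then
       (if i = j then of_real (cos \<theta>) else \<i> * of_real (sin \<theta>)) else 0)"
| "sem SW = (\<lambda>i j. if i < 2 \<and> j < 2 \<and> i \<noteq> j then 1 else 0)"
| "sem ID = (\<lambda>i j. if i = 0 \<and> j = 0 then 1 else 0)"
| "sem EMPTY = (\<lambda>i j. 0)"
| "sem (Seq C2 C1) = (\<lambda>i j. \<Sum>k<modes C1. sem C2 i k * sem C1 k j)"
| "sem (Par C1 C2) = (\<lambda>i j. if i < modes C1 \<and> j < modes C1 then sem C1 i j
       else if modes C1 \<le> i \<and> modes C1 \<le> j then sem C2 (i - modes C1) (j - modes C1)
       else 0)"

definition matvec :: "nat \<Rightarrow> (nat \<Rightarrow> nat \<Rightarrow> complex) \<Rightarrow> (nat \<Rightarrow> complex) \<Rightarrow> (nat \<Rightarrow> complex)" where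
  "matvec m M v = (\<lambda>i. if i < m then (\<Sum>j<m. M i j * v j) else 0)"

text \<open>Bit strings are lists of booleans, False = 0, True = 1.\<close>
fun gray :: "nat \<Rightarrow> nat \<Rightarrow> bool list" where
  "gray 0 k = []"
| "gray (Suc n) k = (if k < 2 ^ n then False # gray n k
                     else True # gray n (2 ^ Suc n - 1 - k))"

text \<open>The map \<open>\<complex>^{2^n} \<rightarrow> \<complex>^{{0,1}^n}\<close>, \<open>|k> \<mapsto> |G_n(k)>\<close>, extended linearly.\<close>
definition gray_map :: "nat \<Rightarrow> (nat \<Rightarrow> complex) \<Rightarrow> (bool list \<Rightarrow> complex)" where
  "gray_map n v = (\<lambda>z. \<Sum>k<2 ^ n. if gray n k = z then v k else 0)"

definition trailing_zeros :: "bool list \<Rightarrow> nat" where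
  "trailing_zeros g = length (takeWhile Not (rev g))"

text \<open>x_{k,n}, y_{k,n}. For odd k, G_n(k) = w a 1 0^q, x = w, y = 1 0^q.\<close>
definition xs_kn :: "nat \<Rightarrow> nat \<Rightarrow> bool list" where
  "xs_kn k n = (if even k then gray (n - 1) (k div 2)
               else (let g = gray n k; q = trailing_zeros g in take (n - q - 2) g))"

definition ys_kn :: "nat \<Rightarrow> nat \<Rightarrow> bool list" where
  "ys_kn k n = (if even k then []
               else (let q = trailing_zeros (gray n k) in True # replicate q False))"

text \<open>Vectors of \<open>\<complex>^{{0,1}^n}\<close> are functions \<open>bool list \<Rightarrow> complex\<close> (only strings of length n
  matter); operators are maps between such functions. A 2x2 matrix is \<open>bool \<Rightarrow> bool \<Rightarrow> complex\<close>
  (row, column).\<close>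

definition ctrl :: "bool list \<Rightarrow> bool list \<Rightarrow> (bool \<Rightarrow> bool \<Rightarrow> complex)
                    \<Rightarrow> (bool list \<Rightarrow> complex) \<Rightarrow> (bool list \<Rightarrow> complex)" where
  "ctrl x y A f = (\<lambda>w. let p = length x in
     if length w = length x + length y + 1 \<and> take p w @ drop (p + 1) w = x @ y
     then A (w ! p) False * f (w[p := False]) + A (w ! p) True * f (w[p := True])
     else f w)"

definition phase_ctrl :: "bool list \<Rightarrow> real \<Rightarrow> (bool list \<Rightarrow> complex) \<Rightarrow> (bool list \<Rightarrow> complex)" where
  "phase_ctrl z \<phi> f = (\<lambda>w. if w = z then exp (\<i> * of_real \<phi>) * f w else f w)"

definition pauliX :: "bool \<Rightarrow> bool \<Rightarrow> complex" where
  "pauliX b a = (if b \<noteq> a then 1 else 0)"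

definition RX :: "real \<Rightarrow> bool \<Rightarrow> bool \<Rightarrow> complex" where
  "RX \<alpha> b a = (if b = a then of_real (cos (\<alpha> / 2)) else - \<i> * of_real (sin (\<alpha> / 2)))"

fun dec :: "nat \<Rightarrow> nat \<Rightarrow> lopp \<Rightarrow> (bool list \<Rightarrow> complex) \<Rightarrow> (bool list \<Rightarrow> complex)" where
  "dec k n (Par C1 C2) = dec (k + modes C1) n C2 \<circ> dec k n C1"
| "dec k n (Seq C2 C1) = dec k n C2 \<circ> dec k n C1"
| "dec k n ID = (\<lambda>f. f)"
| "dec k n EMPTY = (\<lambda>f. f)"
| "dec k n (PH \<phi>) = phase_ctrl (gray n k) \<phi>"
| "dec k n SW = ctrl (xs_kn k n) (ys_kn k n) pauliX"
| "dec k n (BS \<theta>) = ctrl (xs_kn k n) (ys_kn k n) (RX (-2 * \<theta>))"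

end

theory Submission
  imports Defs
begin

text \<open>Consecutive Gray code words \<open>G\<^sub>n(k)\<close> and \<open>G\<^sub>n(k+1)\<close> differ in exactly one bit, at
  position \<open>|x\<^sub>k\<^sub>,\<^sub>n|\<close>, and the remaining bits of \<open>G\<^sub>n(k)\<close> spell \<open>x\<^sub>k\<^sub>,\<^sub>n y\<^sub>k\<^sub>,\<^sub>n\<close>. So under
  \<open>\<GG>\<^sub>n\<close> the two-dimensional subspace spanned by modes \<open>k, k+1\<close> is the target subspace of
  \<open>\<Lambda>\<^sup>x\<^sub>y\<close>, and a two-mode gate acting there becomes the corresponding controlled one-qubit gate,
  while a phase on mode \<open>k\<close> becomes a phase on \<open>|G\<^sub>n(k)\<rangle>\<close>. The theorem follows by induction on
  the circuit, generalised to subcircuits acting on modes \<open>k, \<dots>, k+\<ell>-1\<close>.\<close>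

lemma gray_Suc_snoc:
  "k < 2 ^ Suc n \<Longrightarrow> gray (Suc n) k = gray n (k div 2) @ [odd k \<noteq> odd (k div 2)]"
proof (induction n arbitrary: k)
  case 0
  then have "k = 0 \<or> k = 1" by auto
  then show ?case by auto
next
  case (Suc n)
  define Q :: nat where "Q = 2 ^ n"
  have Q: "Q \<ge> 1" "2 ^ Suc n = 2 * Q" "2 ^ Suc (Suc n) = 4 * Q" unfolding Q_def by auto
  show ?case
  proof (cases "k < 2 ^ Suc n")
    case True
    then have "k div 2 < 2 ^ n" by auto
    then show ?thesis using True Suc.IH[OF True] by simp
  next
    case False
    define k' where "k' = 2 ^ Suc (Suc n) - 1 - k"
    have k'_less: "k' < 2 ^ Suc n" using False Suc.prems Q unfolding k'_def by linarith
    have half_k': "k' div 2 = 2 ^ Suc n - 1 - k div 2"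
      using False Suc.prems Q unfolding k'_def by (simp; presburger)
    have odd_k': "odd k' = even k" using False Suc.prems Q unfolding k'_def by (simp; presburger)
    have odd_half_k': "odd (k' div 2) = even (k div 2)"
      using False Suc.prems Q unfolding half_k' by (simp; presburger)
    have "\<not> k div 2 < 2 ^ n" using False Q Q_def by simp
    have "gray (Suc (Suc n)) k = True # gray (Suc n) k'" using False unfolding k'_def by simp
    also have "\<dots> = True # gray n (k' div 2) @ [odd k' \<noteq> odd (k' div 2)]"
      using Suc.IH[OF k'_less] by simp
    also have "\<dots> = gray (Suc n) (k div 2) @ [odd k \<noteq> odd (k div 2)]"
      using \<open>\<not> k div 2 < 2 ^ n\<close> half_k' odd_k' odd_half_k' by simp
    finally show ?thesis .
  qed
qed

lemma length_gray [simp]: "length (gray n k) = n"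
  by (induction n arbitrary: k) auto

lemma inj_on_gray: "inj_on (gray n) {..<2 ^ n}"
proof (induction n)
  case 0
  then show ?case by (simp add: inj_on_def)
next
  case (Suc n)
  show ?case
  proof (rule inj_onI)
    fix a b assume a: "a \<in> {..<2 ^ Suc n}" and b: "b \<in> {..<2 ^ Suc n}"
      and eq: "gray (Suc n) a = gray (Suc n) b"
    have "gray n (a div 2) @ [odd a \<noteq> odd (a div 2)] = gray n (b div 2) @ [odd b \<noteq> odd (b div 2)]"
      using eq a b by (simp only: gray_Suc_snoc lessThan_iff)
    then have prefix: "gray n (a div 2) = gray n (b div 2)"
      and last: "(odd a \<noteq> odd (a div 2)) = (odd b \<noteq> odd (b div 2))"
      by simp_all
    have "a div 2 = b div 2"
      using a b inj_onD[OF Suc.IH prefix] by simp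
    with last have "odd a = odd b" by metis
    with \<open>a div 2 = b div 2\<close> show "a = b" by presburger
  qed
qed

lemma gray_Suc_even:
  assumes "even j" and "j + 1 < 2 ^ m"
  shows "gray m (j + 1) = (gray m j)[m - 1 := \<not> gray m j ! (m - 1)]"
proof (cases m)
  case 0
  then show ?thesis using assms by simp
next
  case (Suc m')
  have "(j + 1) div 2 = j div 2" "odd (j + 1)" using assms by presburger+
  then show ?thesis using assms Suc gray_Suc_snoc[of j m'] gray_Suc_snoc[of "j + 1" m']
    by (simp add: list_update_append nth_append)
qed

lemma trailing_zeros_snoc_False [simp]:
  "trailing_zeros (xs @ [False]) = Suc (trailing_zeros xs)"
  by (simp add: trailing_zeros_def)

lemma trailing_zeros_snoc_True [simp]: "trailing_zeros (xs @ [True]) = 0"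
  by (simp add: trailing_zeros_def)

lemma drop_trailing_zeros:
  "drop (length g - trailing_zeros g) g = replicate (trailing_zeros g) False"
proof -
  have "drop (length g - trailing_zeros g) g = rev (take (trailing_zeros g) (rev g))"
    by (simp add: rev_take)
  also have "take (trailing_zeros g) (rev g) = takeWhile Not (rev g)"
    unfolding trailing_zeros_def by (rule takeWhile_eq_take[symmetric])
  also have "takeWhile Not (rev g) = replicate (trailing_zeros g) False"
    unfolding trailing_zeros_def by (metis (full_types) replicate_length_same set_takeWhileD)
  finally show ?thesis by simp
qed

text \<open>For odd \<open>k\<close>, \<open>G\<^sub>m(k) = w a 1 0\<^sup>q\<close> and \<open>G\<^sub>m(k+1)\<close> is obtained by flipping \<open>a\<close>.\<close>

lemma gray_Suc_odd:
  assumes "odd k" and "k + 1 < 2 ^ m"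
  shows "trailing_zeros (gray m k) + 2 \<le> m \<and> gray m k ! (m - trailing_zeros (gray m k) - 1) \<and>
    gray m (k + 1) = (gray m k)[m - trailing_zeros (gray m k) - 2 :=
      \<not> gray m k ! (m - trailing_zeros (gray m k) - 2)]"
  using assms
proof (induction m arbitrary: k)
  case 0
  then show ?case by simp
next
  case (Suc m)
  obtain j where k: "k = 2 * j + 1" using Suc.prems(1) oddE by blast
  have j_less: "j + 1 < 2 ^ m" using Suc.prems(2) k by simp
  have gray_k: "gray (Suc m) k = gray m j @ [even j]"
    using gray_Suc_snoc[of k m] Suc.prems k by simp
  have gray_k1: "gray (Suc m) (k + 1) = gray m (j + 1) @ [even j]"
    using gray_Suc_snoc[of "k + 1" m] Suc.prems k by simp
  show ?case
  proof (cases "even j")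
    case True
    have "m \<ge> 1" using j_less by (cases m) auto
    then show ?thesis unfolding gray_k gray_k1 using True gray_Suc_even[OF True j_less]
      by (simp add: list_update_append nth_append)
  next
    case False
    then have "odd j" by simp
    note IH = Suc.IH[OF this j_less]
    then have "trailing_zeros (gray m j) + 2 \<le> m" by simp
    then show ?thesis unfolding gray_k gray_k1 using \<open>odd j\<close> IH
      by (simp add: list_update_append nth_append)
  qed
qed

lemma gray_Suc_flips_control_bit:
  assumes "k + 1 < 2 ^ n"
  defines "p \<equiv> length (xs_kn k n)"
  shows "p + length (ys_kn k n) + 1 = n \<and>
    gray n (k + 1) = (gray n k)[p := \<not> gray n k ! p] \<and>
    take p (gray n k) @ drop (Suc p) (gray n k) = xs_kn k n @ ys_kn k n"
proof (cases "even k")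
  case True
  obtain m where n: "n = Suc m" using assms by (cases n) auto
  obtain j where k: "k = 2 * j" using True by blast
  have "(k + 1) div 2 = j" using k by simp
  then have "gray n k = gray m j @ [odd j]" "gray n (k + 1) = gray m j @ [even j]"
    using gray_Suc_snoc[of k m] gray_Suc_snoc[of "k + 1" m] assms n k by simp_all
  moreover have "xs_kn k n = gray m j" "ys_kn k n = []"
    using True k n by (simp_all add: xs_kn_def ys_kn_def)
  ultimately show ?thesis unfolding p_def by (simp add: list_update_append nth_append n)
next
  case False
  define g where "g = gray n k"
  define q where "q = trailing_zeros g"
  have g: "q + 2 \<le> n" "g ! (n - q - 1)" "gray n (k + 1) = g[n - q - 2 := \<not> g ! (n - q - 2)]"
    using gray_Suc_odd[OF _ assms(1)] False unfolding g_def q_def by auto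
  have xs_ys: "xs_kn k n = take (n - q - 2) g" "ys_kn k n = True # replicate q False"
    using False by (simp_all add: xs_kn_def ys_kn_def g_def q_def Let_def)
  have p: "p = n - q - 2" using g(1) unfolding p_def xs_ys by (simp add: g_def)
  have "drop (n - q) g = replicate q False"
    using drop_trailing_zeros[of g] unfolding q_def g_def by simp
  then have "drop (Suc (n - q - 2)) g = True # replicate q False"
    using Cons_nth_drop_Suc[of "n - q - 1" g] g(1,2) by (simp add: g_def Suc_diff_Suc numeral_2_eq_2)
  then show ?thesis unfolding p using g unfolding xs_ys by (simp add: g_def)
qed

lemma gray_map_gray:
  assumes "k < 2 ^ n"
  shows "gray_map n v (gray n k) = v k"
proof -
  have "gray_map n v (gray n k) = (\<Sum>i<2 ^ n. if i = k then v i else 0)"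
    unfolding gray_map_def using inj_onD[OF inj_on_gray] assms by (intro sum.cong) auto
  then show ?thesis using assms by simp
qed

lemma gray_map_cong:
  "(\<And>i. i < 2 ^ n \<Longrightarrow> gray n i = w \<Longrightarrow> v i = v' i) \<Longrightarrow> gray_map n v w = gray_map n v' w"
  unfolding gray_map_def by (intro sum.cong) auto

lemma phase_ctrl_gray_map:
  assumes "k < 2 ^ n"
  shows "phase_ctrl (gray n k) \<phi> (gray_map n v) =
    gray_map n (v(k := exp (\<i> * of_real \<phi>) * v k))"
proof
  fix w
  show "phase_ctrl (gray n k) \<phi> (gray_map n v) w = gray_map n (v(k := exp (\<i> * of_real \<phi>) * v k)) w"
  proof (cases "w = gray n k")
    case True
    then show ?thesis using assms by (simp add: phase_ctrl_def gray_map_gray)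
  next
    case False
    then show ?thesis unfolding phase_ctrl_def by (auto intro: gray_map_cong)
  qed
qed

lemma gray_map_control_flip:
  assumes "k + 1 < 2 ^ n"
  defines "p \<equiv> length (xs_kn k n)"
  shows "gray_map n u ((gray n k)[p := b]) = (if b = gray n k ! p then u k else u (k + 1))"
  using gray_map_gray[of k n u] gray_map_gray[OF assms(1), of u] assms(1)
    gray_Suc_flips_control_bit[OF assms(1)]
  unfolding p_def by auto

lemma eq_list_update_nth_if_take_drop_eq:
  assumes "length w = length g" and "p < length g"
    and "take p w @ drop (Suc p) w = take p g @ drop (Suc p) g"
  shows "w = g[p := w ! p]"
proof -
  have "take p w = take p g" "drop (Suc p) w = drop (Suc p) g"
    using assms by (simp_all add: append_eq_append_conv)
  then show ?thesis using assms by (metis id_take_nth_drop upd_conv_take_nth_drop)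
qed

context
  fixes x y g :: "bool list"
  assumes length_g: "length g = length x + length y + 1"
    and controls_g: "take (length x) g @ drop (Suc (length x)) g = x @ y"
begin

lemma ctrl_on_target:
  "ctrl x y A f (g[length x := b]) =
    A b False * f (g[length x := False]) + A b True * f (g[length x := True])"
  using length_g controls_g by (simp add: ctrl_def Let_def)

lemma ctrl_off_target:
  assumes "\<And>b. w \<noteq> g[length x := b]"
  shows "ctrl x y A f w = f w"
proof -
  have off: "\<not> (length w = length x + length y + 1 \<and> take (length x) w @ drop (length x + 1) w = x @ y)"
  proof
    assume "length w = length x + length y + 1 \<and> take (length x) w @ drop (length x + 1) w = x @ y"
    then have "w = g[length x := w ! length x]"
      by (intro eq_list_update_nth_if_take_drop_eq) (simp_all add: length_g controls_g)
    with assms show False by blast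
  qed
  then show ?thesis unfolding ctrl_def Let_def by (simp only: off if_False)
qed

end

definition act_on_modes :: "nat \<Rightarrow> nat \<Rightarrow> (nat \<Rightarrow> nat \<Rightarrow> complex) \<Rightarrow> (nat \<Rightarrow> complex) \<Rightarrow> nat \<Rightarrow> complex"
  where "act_on_modes k l M v =
    (\<lambda>i. if k \<le> i \<and> i < k + l then (\<Sum>j<l. M (i - k) j * v (k + j)) else v i)"

lemma ctrl_gray_map:
  assumes k: "k + 1 < 2 ^ n"
    and A: "\<And>b. A b b = M 0 0" "\<And>b. A b (\<not> b) = M 0 1"
    and M: "M 1 1 = M 0 0" "M 1 0 = M 0 1"
  shows "ctrl (xs_kn k n) (ys_kn k n) A (gray_map n v) = gray_map n (act_on_modes k 2 M v)"
proof
  fix w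
  define p where "p = length (xs_kn k n)"
  define g where "g = gray n k"
  define v' where "v' = act_on_modes k 2 M v"
  have length_g: "length g = p + length (ys_kn k n) + 1"
    and flip: "gray n (k + 1) = g[p := \<not> g ! p]"
    and controls_g: "take p g @ drop (Suc p) g = xs_kn k n @ ys_kn k n"
    using gray_Suc_flips_control_bit[OF k] unfolding p_def g_def by simp_all
  have v'_k: "v' k = M 0 0 * v k + M 0 1 * v (k + 1)"
    and v'_Suc_k: "v' (k + 1) = M 0 1 * v k + M 0 0 * v (k + 1)"
    and v'_other: "\<And>i. i \<noteq> k \<Longrightarrow> i \<noteq> k + 1 \<Longrightarrow> v' i = v i"
    using M by (auto simp: v'_def act_on_modes_def numeral_2_eq_2)
  note gray_map_target = gray_map_control_flip[OF k, folded p_def g_def]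
  show "ctrl (xs_kn k n) (ys_kn k n) A (gray_map n v) w = gray_map n v' w"
  proof (cases "\<exists>b. w = g[p := b]")
    case True
    then obtain b where w: "w = g[p := b]" by blast
    have "ctrl (xs_kn k n) (ys_kn k n) A (gray_map n v) w =
        A b False * gray_map n v (g[p := False]) + A b True * gray_map n v (g[p := True])"
      using ctrl_on_target[OF length_g[unfolded p_def] controls_g[unfolded p_def]]
      unfolding w p_def .
    also have "\<dots> = gray_map n v' w"
      unfolding w gray_map_target v'_k v'_Suc_k using A[of True] A[of False]
      by (cases b; cases "g ! p") simp_all
    finally show ?thesis .
  next
    case False
    have "gray_map n v w = gray_map n v' w"
    proof (rule gray_map_cong)
      fix i assume "i < 2 ^ n" and "gray n i = w"
      then have "i \<noteq> k" "i \<noteq> k + 1"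
        using False flip list_update_id[of g p] unfolding g_def by metis+
      then show "v i = v' i" by (simp add: v'_other)
    qed
    then show ?thesis
      using False ctrl_off_target[OF length_g[unfolded p_def] controls_g[unfolded p_def]]
      unfolding p_def by metis
  qed
qed

lemma act_on_modes_comp:
  "act_on_modes k l M2 (act_on_modes k l M1 v) = act_on_modes k l (\<lambda>i j. \<Sum>m<l. M2 i m * M1 m j) v"
proof
  fix i
  show "act_on_modes k l M2 (act_on_modes k l M1 v) i = act_on_modes k l (\<lambda>i j. \<Sum>m<l. M2 i m * M1 m j) v i"
  proof (cases "k \<le> i \<and> i < k + l")
    case True
    have "act_on_modes k l M2 (act_on_modes k l M1 v) i =
        (\<Sum>j<l. M2 (i - k) j * (\<Sum>m<l. M1 j m * v (k + m)))"
      using True unfolding act_on_modes_def by simp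
    also have "\<dots> = (\<Sum>m<l. \<Sum>j<l. M2 (i - k) j * M1 j m * v (k + m))"
      by (subst sum.swap) (simp add: sum_distrib_left mult.assoc)
    also have "\<dots> = act_on_modes k l (\<lambda>i j. \<Sum>m<l. M2 i m * M1 m j) v i"
      using True unfolding act_on_modes_def by (simp add: sum_distrib_right)
    finally show ?thesis .
  next
    case False
    then show ?thesis unfolding act_on_modes_def by auto
  qed
qed

lemma act_on_modes_block_diag:
  "act_on_modes (k + l1) l2 M2 (act_on_modes k l1 M1 v) =
    act_on_modes k (l1 + l2) (\<lambda>i j. if i < l1 \<and> j < l1 then M1 i j
      else if l1 \<le> i \<and> l1 \<le> j then M2 (i - l1) (j - l1) else 0) v"
    (is "?lhs = act_on_modes k (l1 + l2) ?M v")
proof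
  fix i
  have split_sum: "(\<Sum>j<l1 + l2. f j) = (\<Sum>j<l1. f j) + (\<Sum>j<l2. f (l1 + j))" for f :: "nat \<Rightarrow> complex"
    by (induction l2) (simp_all add: add.assoc)
  consider "k \<le> i \<and> i < k + l1" | "k + l1 \<le> i \<and> i < k + l1 + l2" | "\<not> (k \<le> i \<and> i < k + l1 + l2)"
    by linarith
  then show "?lhs i = act_on_modes k (l1 + l2) ?M v i"
  proof cases
    case 1
    then have "i - k < l1" "\<not> l1 \<le> i - k" by auto
    then show ?thesis using 1 unfolding act_on_modes_def by (simp add: split_sum)
  next
    case 2
    then have "\<not> i - k < l1" "l1 \<le> i - k" "i - k - l1 = i - (k + l1)" "\<not> i < k + l1" by auto
    then show ?thesis using 2 unfolding act_on_modes_def by (simp add: split_sum add.assoc)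
  next
    case 3
    then show ?thesis unfolding act_on_modes_def by auto
  qed
qed

lemma dec_gray_map:
  assumes "wf_lopp C" and "k + modes C \<le> 2 ^ n"
  shows "dec k n C (gray_map n v) = gray_map n (act_on_modes k (modes C) (sem C) v)"
  using assms
proof (induction C arbitrary: k v)
  case (PH \<phi>)
  have "act_on_modes k (modes (PH \<phi>)) (sem (PH \<phi>)) v = v(k := exp (\<i> * of_real \<phi>) * v k)"
    by (auto simp: act_on_modes_def)
  moreover have "k < 2 ^ n" using PH.prems by simp
  ultimately show ?case by (simp only: dec.simps phase_ctrl_gray_map)
next
  case (BS \<theta>)
  then have "k + 1 < 2 ^ n" by simp
  then show ?case
    by (simp only: dec.simps modes.simps) (rule ctrl_gray_map, simp_all add: RX_def)
next
  case SW
  then have "k + 1 < 2 ^ n" by simp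
  then show ?case
    by (simp only: dec.simps modes.simps) (rule ctrl_gray_map, simp_all add: pauliX_def)
next
  case ID
  have "act_on_modes k 1 (sem ID) v = v" by (rule ext) (auto simp: act_on_modes_def le_less_Suc_eq)
  then show ?case by simp
next
  case EMPTY
  have "act_on_modes k 0 (sem EMPTY) v = v" by (rule ext) (auto simp: act_on_modes_def)
  then show ?case by simp
next
  case (Seq C2 C1)
  then show ?case by (simp add: act_on_modes_comp)
next
  case (Par C1 C2)
  then show ?case by (simp add: act_on_modes_block_diag)
qed

theorem mainTheorem6:
  fixes n :: nat and C :: lopp and v :: "nat \<Rightarrow> complex" and z :: "bool list"
  assumes "wf_lopp C" and "modes C = 2 ^ n" and "length z = n"
  shows "dec 0 n C (gray_map n v) z = gray_map n (matvec (2 ^ n) (sem C) v) z"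
proof -
  have "dec 0 n C (gray_map n v) z = gray_map n (act_on_modes 0 (2 ^ n) (sem C) v) z"
    using dec_gray_map[of C 0 n v] assms by simp
  also have "\<dots> = gray_map n (matvec (2 ^ n) (sem C) v) z"
    by (rule gray_map_cong) (simp add: act_on_modes_def matvec_def)
  finally show ?thesis .
qed

end
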